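(* Let $p$ be an odd prime. Let $\mathbf v=(1,\dots,1,0,\dots,0)\in(\mathbb{F}_2)^p$ be the vector whose first $(p+1)/2$ entries are $1$ and last $(p-1)/2$ entries are $0$, and for $i\ge 0$ let $\mathbf v_i$ be the vector obtained from $\mathbf v$ by $i$ cyclic shifts, where a cyclic shift sends $(c_0,c_1,\dots,c_{p-1})$ to $(c_{p-1},c_0,\dots,c_{p-2})$. For $\alpha\in\{1,\dots,p-1\}$ let $A_\alpha$ be the $p\times p$ binary array whose row $i$ ($i=0,\dots,p-1$) is $\mathbf v_r$, where $r\in\{0,\dots,p-1\}$, $r\equiv \alpha i\pmod p$. For binary arrays $A,B$ of the same size and $x,y\in\{0,1\}$, let $|AB|_{(x,y)}$ be the number of cells in which $A$ has entry $x$ and $B$ has entry $y$. Then for all distinct $\alpha,\beta\in\{1,\dots,p-1\}$: (a) $|A_\alpha A_\beta|_{(1,0)}=|A_\alpha A_\beta|_{(0,1)}=(p^2-1)/4$; (b) $|A_\alpha A_\beta|_{(0,0)}=(p-1)^2/4$; (c) $|A_\alpha A_\beta|_{(1,1)}=(p+1)^2/4$. *)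

theory Defs
  imports Main "HOL-Computational_Algebra.Primes"
begin

(* Binary vectors of length p: functions nat \<Rightarrow> bool, entry j meaningful for j < p
   (True = 1, False = 0). *)

definition base_vec :: "nat \<Rightarrow> nat \<Rightarrow> bool" where
  "base_vec p j = (j < (p + 1) div 2)"

definition cyc_shift :: "nat \<Rightarrow> (nat \<Rightarrow> bool) \<Rightarrow> (nat \<Rightarrow> bool)" where
  "cyc_shift p c j = (if j = 0 then c (p - 1) else c (j - 1))"

definition shifted_vec :: "nat \<Rightarrow> nat \<Rightarrow> nat \<Rightarrow> bool" where
  "shifted_vec p i = (cyc_shift p ^^ i) (base_vec p)"

definition arr :: "nat \<Rightarrow> nat \<Rightarrow> nat \<Rightarrow> nat \<Rightarrow> bool" where
  "arr p \<alpha> i j = shifted_vec p ((\<alpha> * i) mod p) j"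

definition pair_count :: "nat \<Rightarrow> (nat \<Rightarrow> nat \<Rightarrow> bool) \<Rightarrow> (nat \<Rightarrow> nat \<Rightarrow> bool) \<Rightarrow> bool \<Rightarrow> bool \<Rightarrow> nat" where
  "pair_count p A B x y = card {(i, j). i < p \<and> j < p \<and> A i j = x \<and> B i j = y}"

end

theory Submission
  imports Defs "HOL-Number_Theory.Cong"
begin

(* Cell (i, j) of A_a carries entry (j - a i) mod p of v.  When a - b is a unit mod p,
   (i, j) \<mapsto> ((j - a i) mod p, (j - b i) mod p) is a bijection of (Z/p)^2, so the cells
   where A_a reads x and A_b reads y are counted by the pairs (k, l) with v_k = x and
   v_l = y; and v has (p+1)/2 ones and (p-1)/2 zeros. *)

definition shear_index :: "nat \<Rightarrow> nat \<Rightarrow> nat \<Rightarrow> nat \<Rightarrow> nat" where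
  "shear_index p a i j = nat ((int j - int a * int i) mod int p)"

lemma shear_index_less: "0 < p \<Longrightarrow> shear_index p a i j < p"
  by (simp add: shear_index_def nat_less_iff)

lemma cong_of_shear_index_eq:
  assumes "shear_index p a i j = shear_index p a i' j'" "0 < p"
  shows "[int j - int a * int i = int j' - int a * int i'] (mod int p)"
  using assms by (simp add: shear_index_def cong_def eq_nat_nat_iff)

lemma cyc_shift_power_apply:
  assumes "0 < p" "j < p"
  shows "(cyc_shift p ^^ i) c j = c (nat ((int j - int i) mod int p))"
  using assms(2)
proof (induction i arbitrary: j)
  case 0
  then show ?case by simp
next
  case (Suc i)
  show ?case
  proof (cases "j = 0")
    case True
    have "int (p - 1) - int i = int j - int (Suc i) + int p"
      using True assms(1) by (simp add: of_nat_diff)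
    then have "(int (p - 1) - int i) mod int p = (int j - int (Suc i)) mod int p"
      by (metis mod_add_self2)
    moreover have "(cyc_shift p ^^ Suc i) c j = (cyc_shift p ^^ i) c (p - 1)"
      using True by (simp add: cyc_shift_def)
    ultimately show ?thesis
      using Suc.IH[of "p - 1"] assms(1) by simp
  next
    case False
    then show ?thesis
      using Suc by (simp add: cyc_shift_def of_nat_diff diff_diff_eq)
  qed
qed

lemma arr_eq_base_vec_shear_index:
  assumes "0 < p" "j < p"
  shows "arr p a i j = base_vec p (shear_index p a i j)"
proof -
  have "(int j - int ((a * i) mod p)) mod int p = (int j - int a * int i) mod int p"
    by (simp add: of_nat_mod mod_diff_right_eq)
  then show ?thesis
    using assms by (simp add: arr_def shifted_vec_def cyc_shift_power_apply shear_index_def)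
qed

lemma inj_on_shear_index_pair:
  assumes "0 < p" and "coprime (int a - int b) (int p)"
  shows "inj_on (\<lambda>(i, j). (shear_index p a i j, shear_index p b i j)) ({..<p} \<times> {..<p})"
proof (rule inj_onI, clarsimp)
  fix i j i' j'
  assume less: "i < p" "j < p" "i' < p" "j' < p"
    and eq_a: "shear_index p a i j = shear_index p a i' j'"
    and eq_b: "shear_index p b i j = shear_index p b i' j'"
  note cong_a = cong_of_shear_index_eq[OF eq_a assms(1)]
  note cong_b = cong_of_shear_index_eq[OF eq_b assms(1)]
  have "[(int a - int b) * int i = (int a - int b) * int i'] (mod int p)"
    using cong_diff[OF cong_b cong_a] by (simp add: algebra_simps)
  with assms(2) have "[int i = int i'] (mod int p)"
    by (simp add: cong_mult_lcancel)
  then have "i = i'"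
    using less cong_less_imp_eq_int[of "int i" "int p" "int i'"] by simp
  then have "[int j = int j'] (mod int p)"
    using cong_add[OF cong_a cong_refl[of "int a * int i"]] by simp
  then show "i = i' \<and> j = j'"
    using \<open>i = i'\<close> less cong_less_imp_eq_int[of "int j" "int p" "int j'"] by simp
qed

lemma bij_betw_shear_index_pair:
  assumes "0 < p" and "coprime (int a - int b) (int p)"
  shows "bij_betw (\<lambda>(i, j). (shear_index p a i j, shear_index p b i j))
           ({..<p} \<times> {..<p}) ({..<p} \<times> {..<p})"
proof -
  from assms(1) have "(\<lambda>(i, j). (shear_index p a i j, shear_index p b i j)) ` ({..<p} \<times> {..<p})
      \<subseteq> {..<p} \<times> {..<p}"
    by (auto simp: shear_index_less)
  with inj_on_shear_index_pair[OF assms] show ?thesis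
    by (simp add: bij_betw_def endo_inj_surj)
qed

lemma pair_count_arr:
  assumes p: "0 < p" and "coprime (int a - int b) (int p)"
  shows "pair_count p (arr p a) (arr p b) x y
       = card {k. k < p \<and> base_vec p k = x} * card {l. l < p \<and> base_vec p l = y}"
proof -
  let ?D = "{..<p} \<times> {..<p}"
  let ?P = "\<lambda>(k, l). base_vec p k = x \<and> base_vec p l = y"
  let ?Q = "\<lambda>(i, j). arr p a i j = x \<and> arr p b i j = y"
  have "bij_betw (\<lambda>(i, j). (shear_index p a i j, shear_index p b i j))
      {z \<in> ?D. ?Q z} {w \<in> ?D. ?P w}"
    by (rule bij_betw_Collect[OF bij_betw_shear_index_pair[OF assms]])
       (auto simp: arr_eq_base_vec_shear_index p)
  moreover have "pair_count p (arr p a) (arr p b) x y = card {z \<in> ?D. ?Q z}"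
    unfolding pair_count_def by (rule arg_cong[where f = card]) auto
  ultimately have "pair_count p (arr p a) (arr p b) x y = card {w \<in> ?D. ?P w}"
    by (simp add: bij_betw_same_card)
  also have "{w \<in> ?D. ?P w} = {k. k < p \<and> base_vec p k = x} \<times> {l. l < p \<and> base_vec p l = y}"
    by auto
  finally show ?thesis
    by (simp only: card_cartesian_product)
qed

lemma card_base_vec_True:
  assumes "odd p"
  shows "card {k. k < p \<and> base_vec p k = True} = (p + 1) div 2"
proof -
  have "{k. k < p \<and> base_vec p k = True} = {..<(p + 1) div 2}"
    using assms by (auto simp: base_vec_def elim!: oddE)
  then show ?thesis by simp
qed

lemma card_base_vec_False:
  assumes "odd p"
  shows "card {k. k < p \<and> base_vec p k = False} = (p - 1) div 2"
proof -
  have "{k. k < p \<and> base_vec p k = False} = {(p + 1) div 2..<p}"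
    using assms by (auto simp: base_vec_def elim!: oddE)
  then show ?thesis using assms by (auto elim!: oddE)
qed

theorem mainTheorem15:
  fixes p \<alpha> \<beta> :: nat
  assumes "prime p" and "odd p"
    and "\<alpha> \<in> {1..p-1}" and "\<beta> \<in> {1..p-1}" and "\<alpha> \<noteq> \<beta>"
  shows "pair_count p (arr p \<alpha>) (arr p \<beta>) True False = (p^2 - 1) div 4
       \<and> pair_count p (arr p \<alpha>) (arr p \<beta>) False True = (p^2 - 1) div 4
       \<and> pair_count p (arr p \<alpha>) (arr p \<beta>) False False = (p - 1)^2 div 4
       \<and> pair_count p (arr p \<alpha>) (arr p \<beta>) True True = (p + 1)^2 div 4"
proof -
  have "\<alpha> < p" "\<beta> < p"
    using assms(3,4) by auto
  then have "\<not> [int \<alpha> = int \<beta>] (mod int p)"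
    using assms(5) cong_less_imp_eq_nat[of \<alpha> p \<beta>] by (auto simp: cong_int_iff)
  then have "\<not> int p dvd int \<alpha> - int \<beta>"
    by (simp add: cong_iff_dvd_diff)
  then have "coprime (int \<alpha> - int \<beta>) (int p)"
    using assms(1) prime_imp_coprime[of "int p"] coprime_commute prime_nat_int_transfer by metis
  note counts = pair_count_arr[OF prime_gt_0_nat[OF assms(1)] this]
    card_base_vec_True[OF assms(2)] card_base_vec_False[OF assms(2)]
  obtain m where m: "p = 2 * m + 1" using assms(2) oddE by blast
  have "(p^2 - 1) div 4 = (m + 1) * m" "(p - 1)^2 div 4 = m * m"
    "(p + 1)^2 div 4 = (m + 1) * (m + 1)"
    using m by (simp_all add: power2_eq_square algebra_simps)
  then show ?thesis
    using counts m by (simp add: mult.commute)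
qed

end
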